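(* Fix a single machine with nonnegative real parameters $k^A,k^B,t^A,t^B$, a real bound $L$ and nonnegative integers $n_a,n_b$. For $0\le a\le n_a$, $0\le b\le n_b$ let $F(a,b)=1$ if $f(a,b)\le L$ and $F(a,b)=0$ otherwise, where $f$ is as in the context. Then, whenever all entries of $F$ mentioned below lie in the range $0\le a\le n_a$, $0\le b\le n_b$: (1) if $b\le a+1$ and $F(a,b)=0$, then $F(a+1,b)=0$; (2) if $b\ge a+1$ and $F(a,b)=0$, then $F(a,b+1)=0$; (3) if $F(a,a+1)=0$, then $F(a+1,a+2)=0$; (4) if $F(a+1,a+1)=0$ and $F(a+1,a+2)=1$, then $F(a,a+1)=1$.
   Context: A machine processes jobs of two types, A and B, in batches. A schedule for the task-combination $(a,b)$ is a finite sequence of batches, each a nonempty group of jobs of a single type, with consecutive batches of different types, processing exactly $a$ A-jobs and $b$ B-jobs in total. An A-batch of $x$ jobs takes $t^A+k^A x^2$ time units, a B-batch of $x$ jobs takes $t^B+k^B x^2$ time units; the time of a schedule is the sum of its batch times (empty schedule: time $0$). $f(a,b)$ is the minimum time over all schedules for $(a,b)$. *)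

theory Defs
  imports Main "HOL.Real"
begin

datatype jtype = JA | JB

text \<open>A batch is a pair (type, number of jobs); a schedule is a list of batches.\<close>
type_synonym batch = "jtype \<times> nat"

definition valid_schedule :: "batch list \<Rightarrow> nat \<Rightarrow> nat \<Rightarrow> bool" where
  "valid_schedule s a b \<longleftrightarrow>
     (\<forall>x \<in> set s. snd x > 0) \<and>
     (\<forall>i. Suc i < length s \<longrightarrow> fst (s ! i) \<noteq> fst (s ! Suc i)) \<and>
     sum_list (map snd (filter (\<lambda>x. fst x = JA) s)) = a \<and>
     sum_list (map snd (filter (\<lambda>x. fst x = JB) s)) = b"

definition batch_time :: "real \<Rightarrow> real \<Rightarrow> real \<Rightarrow> real \<Rightarrow> batch \<Rightarrow> real" where
  "batch_time kA kB tA tB x =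
     (case fst x of JA \<Rightarrow> tA + kA * (real (snd x))^2
                  | JB \<Rightarrow> tB + kB * (real (snd x))^2)"

definition sched_time :: "real \<Rightarrow> real \<Rightarrow> real \<Rightarrow> real \<Rightarrow> batch list \<Rightarrow> real" where
  "sched_time kA kB tA tB s = sum_list (map (batch_time kA kB tA tB) s)"

definition fmin :: "real \<Rightarrow> real \<Rightarrow> real \<Rightarrow> real \<Rightarrow> nat \<Rightarrow> nat \<Rightarrow> real" where
  "fmin kA kB tA tB a b = Min {sched_time kA kB tA tB s | s. valid_schedule s a b}"

definition Fval :: "real \<Rightarrow> real \<Rightarrow> real \<Rightarrow> real \<Rightarrow> real \<Rightarrow> nat \<Rightarrow> nat \<Rightarrow> nat" where
  "Fval kA kB tA tB L a b = (if fmin kA kB tA tB a b \<le> L then 1 else 0)"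

end

theory Submission
  imports Defs
begin

(* For b \<le> a + 1, an optimal schedule for (a + 1, b) can be turned into a schedule for
   (a, b) that is no slower.  Either some A-batch has at least two jobs and loses one, or all
   A-batches are singletons and one of them is the first or the last batch and can be dropped;
   otherwise the schedule begins and ends with a B-batch, so it has one more B-batch than
   A-batches and b \<ge> a + 2.  Hence f(a, b) \<le> f(a + 1, b), and by the A/B symmetry
   f(a, b) \<le> f(a, b + 1) for a \<le> b + 1.  Claims (1)-(3) follow, and the hypotheses of (4)
   contradict (2). *)

definition jobs :: "jtype \<Rightarrow> batch list \<Rightarrow> nat" where
  "jobs T s = sum_list (map snd (filter (\<lambda>x. fst x = T) s))"

definition batches :: "jtype \<Rightarrow> batch list \<Rightarrow> nat" where
  "batches T s = length (filter (\<lambda>x. fst x = T) s)"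

abbreviation alternating :: "batch list \<Rightarrow> bool" where
  "alternating \<equiv> successively (\<lambda>x y. fst x \<noteq> fst y)"

lemma valid_schedule_iff:
  "valid_schedule s a b \<longleftrightarrow>
     (\<forall>x\<in>set s. 0 < snd x) \<and> alternating s \<and> jobs JA s = a \<and> jobs JB s = b"
  by (simp add: valid_schedule_def jobs_def successively_conv_nth)

lemma jobs_Cons: "jobs T (x # s) = (if fst x = T then snd x else 0) + jobs T s"
  by (simp add: jobs_def)

lemma jobs_append: "jobs T (s @ s') = jobs T s + jobs T s'"
  by (simp add: jobs_def)

lemma batches_le_jobs: "\<forall>x\<in>set s. 0 < snd x \<Longrightarrow> batches T s \<le> jobs T s"
  by (induction s) (auto simp: batches_def jobs_def)

lemma jobs_eq_batches: "\<forall>x\<in>set s. fst x = T \<longrightarrow> snd x = 1 \<Longrightarrow> jobs T s = batches T s"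
  by (induction s) (auto simp: batches_def jobs_def)

lemma sched_time_Cons:
  "sched_time kA kB tA tB (x # s) = batch_time kA kB tA tB x + sched_time kA kB tA tB s"
  by (simp add: sched_time_def)

lemma sched_time_append:
  "sched_time kA kB tA tB (s @ s') = sched_time kA kB tA tB s + sched_time kA kB tA tB s'"
  by (simp add: sched_time_def)

lemma sched_time_rev: "sched_time kA kB tA tB (rev s) = sched_time kA kB tA tB s"
  by (induction s) (simp_all add: sched_time_def)

lemma valid_schedule_rev: "valid_schedule (rev s) a b \<longleftrightarrow> valid_schedule s a b"
proof -
  have "successively (\<lambda>x y. fst y \<noteq> fst x) s \<longleftrightarrow> alternating s"
    by (metis (mono_tags, lifting) successively_mono)
  then show ?thesis
    by (simp add: valid_schedule_iff jobs_def rev_filter[symmetric] rev_map[symmetric])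
qed

fun other_type :: "jtype \<Rightarrow> jtype" where
  "other_type JA = JB"
| "other_type JB = JA"

definition swap_types :: "batch list \<Rightarrow> batch list" where
  "swap_types = map (apfst other_type)"

lemma other_type_other_type [simp]: "other_type (other_type T) = T"
  by (cases T) auto

lemma other_type_eq_iff [simp]: "other_type T = other_type U \<longleftrightarrow> T = U"
  by (cases T; cases U) auto

lemma jobs_swap_types: "jobs T (swap_types s) = jobs (other_type T) s"
  by (induction s) (auto simp: swap_types_def jobs_def)

lemma valid_schedule_swap_types: "valid_schedule (swap_types s) b a \<longleftrightarrow> valid_schedule s a b"
  unfolding valid_schedule_iff jobs_swap_types by (auto simp: swap_types_def successively_map)

lemma sched_time_swap_types:
  "sched_time kB kA tB tA (swap_types s) = sched_time kA kB tA tB s"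
proof -
  have "batch_time kB kA tB tA (apfst other_type x) = batch_time kA kB tA tB x" for x
    by (cases x; cases "fst x") (auto simp: batch_time_def)
  then show ?thesis
    by (simp add: sched_time_def swap_types_def comp_def)
qed

lemma fmin_swap: "fmin kB kA tB tA b a = fmin kA kB tA tB a b"
proof -
  have "{sched_time kB kA tB tA s | s. valid_schedule s b a}
      = {sched_time kA kB tA tB s | s. valid_schedule s a b}"
    by (metis (no_types) valid_schedule_swap_types sched_time_swap_types)
  then show ?thesis
    by (simp add: fmin_def)
qed

lemma finite_valid_schedules: "finite {s. valid_schedule s a b}"
proof -
  have univ: "finite (UNIV :: jtype set)"
  proof -
    have "(UNIV :: jtype set) \<subseteq> {JA, JB}"
      using jtype.exhaust by auto
    then show ?thesis
      by (rule finite_subset) simp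
  qed
  have total: "sum_list (map snd s) = jobs JA s + jobs JB s" for s
  proof (induction s)
    case (Cons x s)
    then show ?case
      by (cases "fst x") (auto simp: jobs_Cons)
  qed (simp add: jobs_def)
  have length_le: "length s \<le> sum_list (map snd s)" if "\<forall>x\<in>set s. 0 < snd x"
    for s :: "batch list"
    using that by (induction s) auto
  have "set s \<subseteq> UNIV \<times> {..a + b} \<and> length s \<le> a + b" if "valid_schedule s a b" for s
  proof -
    have pos: "\<forall>x\<in>set s. 0 < snd x" and sum: "sum_list (map snd s) = a + b"
      using that total by (auto simp: valid_schedule_iff)
    have "snd x \<le> a + b" if "x \<in> set s" for x
      using member_le_sum_list[of "snd x" "map snd s"] that sum by simp
    then show ?thesis
      using length_le[OF pos] sum by auto
  qed
  then have "{s. valid_schedule s a b} \<subseteq> {s. set s \<subseteq> UNIV \<times> {..a + b} \<and> length s \<le> a + b}"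
    by blast
  moreover have "finite {s :: batch list. set s \<subseteq> UNIV \<times> {..a + b} \<and> length s \<le> a + b}"
    using univ by (intro finite_lists_length_le finite_cartesian_product) auto
  ultimately show ?thesis
    by (rule finite_subset)
qed

lemma valid_schedule_exists: "\<exists>s. valid_schedule s a b"
proof -
  have "valid_schedule (filter (\<lambda>x. 0 < snd x) [(JA, a), (JB, b)]) a b"
    by (simp add: valid_schedule_iff jobs_def)
  then show ?thesis ..
qed

lemma fmin_le_sched_time:
  "valid_schedule s a b \<Longrightarrow> fmin kA kB tA tB a b \<le> sched_time kA kB tA tB s"
  unfolding fmin_def
  using finite_valid_schedules[of a b] by (intro Min_le) auto

lemma fmin_attained:
  "\<exists>s. valid_schedule s a b \<and> fmin kA kB tA tB a b = sched_time kA kB tA tB s"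
proof -
  have "fmin kA kB tA tB a b \<in> {sched_time kA kB tA tB s | s. valid_schedule s a b}"
    unfolding fmin_def
    using finite_valid_schedules[of a b] valid_schedule_exists[of a b] by (intro Min_in) auto
  then show ?thesis by blast
qed

lemma batch_time_nonneg:
  "\<lbrakk>0 \<le> kA; 0 \<le> kB; 0 \<le> tA; 0 \<le> tB\<rbrakk> \<Longrightarrow> 0 \<le> batch_time kA kB tA tB x"
  by (auto simp: batch_time_def split: jtype.split)

lemma batch_time_mono:
  assumes "0 \<le> kA" "0 \<le> kB" "k \<le> k'"
  shows "batch_time kA kB tA tB (T, k) \<le> batch_time kA kB tA tB (T, k')"
proof -
  have "(real k)^2 \<le> (real k')^2"
    using assms(3) by (simp add: power_mono)
  then show ?thesis
    using assms by (cases T) (auto simp: batch_time_def mult_left_mono)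
qed

lemma alternating_batches:
  assumes "alternating (x # xs)"
  shows "batches (fst x) (x # xs)
       = batches (other_type (fst x)) (x # xs) + (if fst (last (x # xs)) = fst x then 1 else 0)"
  using assms
proof (induction xs arbitrary: x)
  case Nil
  then show ?case
    by (cases "fst x") (auto simp: batches_def)
next
  case (Cons y ys)
  have y: "fst y = other_type (fst x)"
    using Cons.prems by (cases "fst x"; cases "fst y") auto
  have "fst (last (y # ys)) = fst x \<or> fst (last (y # ys)) = fst y"
    using y by (cases "fst x"; cases "fst (last (y # ys))") auto
  then show ?case
    using Cons.IH[of y] Cons.prems y by (auto simp: batches_def)
qed

lemma valid_schedule_shrink_batch:
  "\<lbrakk>valid_schedule (xs @ (JA, Suc k) # ys) (Suc a) b; 0 < k\<rbrakk>
   \<Longrightarrow> valid_schedule (xs @ (JA, k) # ys) a b"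
  by (auto simp: valid_schedule_iff jobs_append jobs_Cons successively_append_iff
      successively_Cons)

lemma valid_schedule_drop_first:
  "valid_schedule ((JA, 1) # s) (Suc a) b \<Longrightarrow> valid_schedule s a b"
  by (auto simp: valid_schedule_iff jobs_Cons successively_Cons)

lemma remove_A_job:
  assumes nonneg: "0 \<le> kA" "0 \<le> kB" "0 \<le> tA" "0 \<le> tB"
    and s: "valid_schedule s (Suc a) b" and b: "b \<le> Suc a"
  shows "\<exists>s'. valid_schedule s' a b \<and> sched_time kA kB tA tB s' \<le> sched_time kA kB tA tB s"
proof (cases "\<exists>k. (JA, Suc (Suc k)) \<in> set s")
  case True
  then obtain k xs ys where split: "s = xs @ (JA, Suc (Suc k)) # ys"
    by (metis split_list)
  have "batch_time kA kB tA tB (JA, Suc k) \<le> batch_time kA kB tA tB (JA, Suc (Suc k))"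
    using batch_time_mono nonneg by simp
  then show ?thesis
    using valid_schedule_shrink_batch[of xs "Suc k" ys a b] s
    by (intro exI[of _ "xs @ (JA, Suc k) # ys"]) (simp add: split sched_time_append sched_time_Cons)
next
  case False
  have singleton: "\<forall>x\<in>set s. fst x = JA \<longrightarrow> snd x = 1"
  proof (intro ballI impI)
    fix x assume x: "x \<in> set s" "fst x = JA"
    then have "0 < snd x"
      using s by (simp add: valid_schedule_iff)
    moreover have "snd x \<noteq> Suc (Suc k)" for k
      using False x by (metis prod.collapse)
    ultimately show "snd x = 1"
      by (metis One_nat_def gr0_conv_Suc not0_implies_Suc)
  qed
  have s_ne: "s \<noteq> []"
    using s by (auto simp: valid_schedule_iff jobs_def)
  have drop_first: "\<exists>s'. valid_schedule s' a b \<and> sched_time kA kB tA tB s' \<le> sched_time kA kB tA tB r"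
    if r: "valid_schedule r (Suc a) b" "r \<noteq> []" "fst (hd r) = JA"
      "\<forall>x\<in>set r. fst x = JA \<longrightarrow> snd x = 1"
    for r
  proof -
    obtain r' where r': "r = (JA, 1) # r'"
      using r(2-4) by (cases r) auto
    show ?thesis
      using r(1) valid_schedule_drop_first batch_time_nonneg[OF nonneg]
      by (intro exI[of _ r']) (auto simp: r' sched_time_Cons)
  qed
  consider "fst (hd s) = JA" | "fst (last s) = JA" | "fst (hd s) = JB" "fst (last s) = JB"
    using jtype.exhaust by metis
  then show ?thesis
  proof cases
    case 1
    then show ?thesis
      using drop_first s s_ne singleton by blast
  next
    case 2
    then show ?thesis
      using drop_first[of "rev s"] s s_ne singleton
      by (simp add: valid_schedule_rev sched_time_rev hd_rev)
  next
    case 3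
    obtain x xs where x: "s = x # xs" and "fst x = JB"
      using 3 s_ne by (cases s) auto
    then have "batches JB s = Suc (batches JA s)"
      using 3 alternating_batches[of x xs] s by (simp add: valid_schedule_iff)
    moreover have "batches JB s \<le> b" "batches JA s = Suc a"
      using s batches_le_jobs jobs_eq_batches[OF singleton] by (auto simp: valid_schedule_iff)
    ultimately show ?thesis
      using b by simp
  qed
qed

lemma fmin_mono_A:
  assumes "0 \<le> kA" "0 \<le> kB" "0 \<le> tA" "0 \<le> tB" "b \<le> Suc a"
  shows "fmin kA kB tA tB a b \<le> fmin kA kB tA tB (Suc a) b"
proof -
  obtain s where s: "valid_schedule s (Suc a) b" "fmin kA kB tA tB (Suc a) b = sched_time kA kB tA tB s"
    using fmin_attained by blast
  obtain s' where s': "valid_schedule s' a b" "sched_time kA kB tA tB s' \<le> sched_time kA kB tA tB s"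
    using remove_A_job[OF assms(1-4) s(1) assms(5)] by blast
  have "fmin kA kB tA tB a b \<le> sched_time kA kB tA tB s'"
    using s'(1) by (rule fmin_le_sched_time)
  then show ?thesis
    using s'(2) s(2) by linarith
qed

lemma fmin_mono_B:
  assumes "0 \<le> kA" "0 \<le> kB" "0 \<le> tA" "0 \<le> tB" "a \<le> Suc b"
  shows "fmin kA kB tA tB a b \<le> fmin kA kB tA tB a (Suc b)"
  using fmin_mono_A[of kB kA tB tA a b] assms by (simp add: fmin_swap)

theorem lemma4:
  fixes kA kB tA tB L :: real and na nb :: nat
  assumes "kA \<ge> 0" and "kB \<ge> 0" and "tA \<ge> 0" and "tB \<ge> 0"
  defines "F \<equiv> Fval kA kB tA tB L"
  shows
    "(\<forall>a b. a + 1 \<le> na \<and> b \<le> nb \<and> b \<le> a + 1 \<and> F a b = 0 \<longrightarrow> F (a + 1) b = 0)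
   \<and> (\<forall>a b. a \<le> na \<and> b + 1 \<le> nb \<and> b \<ge> a + 1 \<and> F a b = 0 \<longrightarrow> F a (b + 1) = 0)
   \<and> (\<forall>a. a + 1 \<le> na \<and> a + 2 \<le> nb \<and> F a (a + 1) = 0 \<longrightarrow> F (a + 1) (a + 2) = 0)
   \<and> (\<forall>a. a + 1 \<le> na \<and> a + 2 \<le> nb \<and> F (a + 1) (a + 1) = 0 \<and> F (a + 1) (a + 2) = 1
        \<longrightarrow> F a (a + 1) = 1)"
proof -
  have A: "F a b = 0 \<Longrightarrow> F (Suc a) b = 0" if "b \<le> Suc a" for a b
    using fmin_mono_A[OF assms(1-4) that] by (auto simp: F_def Fval_def split: if_splits)
  have B: "F a b = 0 \<Longrightarrow> F a (Suc b) = 0" if "a \<le> Suc b" for a b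
    using fmin_mono_B[OF assms(1-4) that] by (auto simp: F_def Fval_def split: if_splits)
  have diagonal: "F (Suc a) (Suc a) = 0 \<Longrightarrow> F (Suc a) (Suc (Suc a)) = 0" for a
    using B by simp
  have "F a (Suc a) = 0 \<Longrightarrow> F (Suc a) (Suc (Suc a)) = 0" for a
    using A[of "Suc a" a] diagonal by simp
  then show ?thesis
    using A B diagonal by (auto simp: numeral_2_eq_2)
qed

end
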